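(* Let $H_\omega = -\Delta + V_\omega$ be the Anderson Hamiltonian on $\ell^2(\mathbb{Z}^d)$. Then, with probability one, $H_\omega$ has no eigenvalue $E$ admitting two linearly independent fast decaying eigenfunctions.
   Context: The Anderson Hamiltonian is the random operator $H_\omega = -\Delta + V_\omega$ on $\ell^2(\mathbb{Z}^d)$, where $\Delta(x,y)=1$ if $|x-y|=1$ and $\Delta(x,y)=0$ otherwise, and the random potential $V_\omega = \{V_\omega(x), x\in\mathbb{Z}^d\}$ (acting by multiplication) consists of independent identically distributed random variables whose common probability distribution $\mu$ has a bounded density $\rho$. Write $\langle x\rangle = \sqrt{1+|x|^2}$. A vector $\varphi\in\ell^2(\mathbb{Z}^d)$ has $\beta$-decay if $|\varphi(x)|\le C_\varphi \langle x\rangle^{-\beta}$ for all $x$ and some constant $C_\varphi<\infty$; $\varphi$ is called fast decaying if it has $\beta$-decay for some $\beta > \frac{5d}{2}$. *)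

theory Defs
  imports "HOL-Probability.Probability"
begin

text \<open>Lattice sites of Z^d are modelled as vectors int ^ 'd, where the finite type 'd
  indexes the d coordinates (d = CARD('d)).  Wave functions are complex valued.\<close>

definition sqdist_lat :: "int ^ 'd \<Rightarrow> int ^ 'd \<Rightarrow> int" where
  "sqdist_lat x y = (\<Sum>i\<in>UNIV. (x $ i - y $ i)^2)"

definition lat_neighbors :: "int ^ 'd \<Rightarrow> (int ^ 'd) set" where
  "lat_neighbors x = {y. sqdist_lat x y = 1}"

text \<open>Discrete Laplacian (adjacency operator) as in the paper: Delta(x,y) = 1 iff |x-y| = 1.\<close>
definition lat_Delta :: "(int ^ 'd \<Rightarrow> complex) \<Rightarrow> int ^ 'd \<Rightarrow> complex" where
  "lat_Delta \<phi> x = (\<Sum>y\<in>lat_neighbors x. \<phi> y)"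

definition anderson_H :: "(int ^ 'd \<Rightarrow> real) \<Rightarrow> (int ^ 'd \<Rightarrow> complex) \<Rightarrow> int ^ 'd \<Rightarrow> complex" where
  "anderson_H V \<phi> x = - lat_Delta \<phi> x + complex_of_real (V x) * \<phi> x"

definition in_l2 :: "(int ^ 'd \<Rightarrow> complex) \<Rightarrow> bool" where
  "in_l2 \<phi> \<longleftrightarrow> (\<lambda>x. (norm (\<phi> x))^2) summable_on UNIV"

definition jbracket :: "int ^ 'd \<Rightarrow> real" where
  "jbracket x = sqrt (1 + real_of_int (\<Sum>i\<in>UNIV. (x $ i)^2))"

definition has_decay :: "real \<Rightarrow> (int ^ 'd \<Rightarrow> complex) \<Rightarrow> bool" where
  "has_decay \<beta> \<phi> \<longleftrightarrow> (\<exists>C. \<forall>x. norm (\<phi> x) \<le> C * jbracket x powr (- \<beta>))"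

definition fast_decaying :: "(int ^ 'd \<Rightarrow> complex) \<Rightarrow> bool" where
  "fast_decaying \<phi> \<longleftrightarrow> (\<exists>\<beta>. \<beta> > 5 * real CARD('d) / 2 \<and> has_decay \<beta> \<phi>)"

definition is_eigenfunction :: "(int ^ 'd \<Rightarrow> real) \<Rightarrow> real \<Rightarrow> (int ^ 'd \<Rightarrow> complex) \<Rightarrow> bool" where
  "is_eigenfunction V E \<phi> \<longleftrightarrow> in_l2 \<phi> \<and> \<phi> \<noteq> (\<lambda>_. 0) \<and> (\<forall>x. anderson_H V \<phi> x = of_real E * \<phi> x)"

definition lin_indep2 :: "('a \<Rightarrow> complex) \<Rightarrow> ('a \<Rightarrow> complex) \<Rightarrow> bool" where
  "lin_indep2 f g \<longleftrightarrow> (\<forall>a b. (\<forall>x. a * f x + b * g x = 0) \<longrightarrow> a = 0 \<and> b = 0)"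

end

theory Submission
  imports Defs
begin

(* Fix sites x, z and a bound C, and let N(x, z, C) = degenerate_potentials x z C be the set of
  potentials V with an eigenvalue E in [-C, C] having eigenfunctions psi, phi bounded by
  C <y>^(-d) and normalised by psi(x) = 0, psi(z) = 1, phi(x) = 1.  Two independent fast decaying
  eigenfunctions of one eigenvalue can be combined into such psi and phi, so the bad event lies in
  the countable union of the N(x, z, C) and it suffices that each of them is null.

  N(x, z, C) is closed, because its witnesses (E, psi, phi) range over a compact set (Tychonoff),
  hence measurable, and by Fubini it suffices that for fixed values of V off x only finitely many
  values V(x) = v give a potential in N(x, z, C).  For such v, Green's identity for the
  eigenfunctions phi_v shows that the eigenvalue E_v determines v.  The psi_v vanish at x, so they
  are eigenfunctions of the single operator with potential V(x := 0), for distinct eigenvalues,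
  hence orthogonal; as psi_v(z) = 1 and the squared norms are at most C^2 * sum_y <y>^(-2d), the
  norm of the sum of n of them gives n^2 <= n C^2 sum_y <y>^(-2d).  Finite sets are null for an
  absolutely continuous single-site distribution.

  Only decay faster than <y>^(-d) is used. *)

section \<open>Square-summable families\<close>

lemma summable_on_sum:
  fixes f :: "'i \<Rightarrow> 'a \<Rightarrow> 'b::topological_comm_monoid_add"
  assumes "finite I" "\<And>i. i \<in> I \<Longrightarrow> f i summable_on A"
  shows "(\<lambda>y. \<Sum>i\<in>I. f i y) summable_on A"
  using assms by (induction I rule: finite_induct) (auto intro!: summable_on_add)

lemma infsum_sum:
  fixes f :: "'i \<Rightarrow> 'a \<Rightarrow> 'b::{topological_comm_monoid_add, t2_space}"
  assumes "finite I" "\<And>i. i \<in> I \<Longrightarrow> f i summable_on A"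
  shows "(\<Sum>\<^sub>\<infinity>y\<in>A. \<Sum>i\<in>I. f i y) = (\<Sum>i\<in>I. \<Sum>\<^sub>\<infinity>y\<in>A. f i y)"
  using assms
proof (induction I rule: finite_induct)
  case (insert j I)
  then show ?case
    by (simp add: infsum_add summable_on_sum)
qed simp

lemma infsum_diff:
  fixes f g :: "'a \<Rightarrow> 'b::{topological_ab_group_add, t2_space}"
  assumes "f summable_on A" "g summable_on A"
  shows "(\<Sum>\<^sub>\<infinity>y\<in>A. f y - g y) = (\<Sum>\<^sub>\<infinity>y\<in>A. f y) - (\<Sum>\<^sub>\<infinity>y\<in>A. g y)"
  using infsum_add[OF assms(1) summable_on_uminus[THEN iffD2, OF assms(2)]]
  by (simp add: infsum_uminus)

lemma infsum_if_eq:
  fixes c :: "'b::{topological_comm_monoid_add, t2_space}"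
  shows "(\<Sum>\<^sub>\<infinity>y. if y = x then c else 0) = c"
  by (subst infsum_cong_neutral[where T = "{x}"]) auto

lemma summable_on_cnj_mult:
  fixes f g :: "'a \<Rightarrow> complex"
  assumes "(\<lambda>y. (norm (f y))^2) summable_on A" "(\<lambda>y. (norm (g y))^2) summable_on A"
  shows "(\<lambda>y. cnj (g y) * f y) summable_on A"
proof (rule abs_summable_summable, rule abs_summable_product)
  show "(\<lambda>y. norm (cnj (g y) * cnj (g y))) summable_on A" "(\<lambda>y. norm (f y * f y)) summable_on A"
    using assms by (simp_all add: norm_mult power2_eq_square)
qed

lemma infsum_mult_cnj_self:
  fixes f :: "'a \<Rightarrow> complex"
  assumes "(\<lambda>y. (norm (f y))^2) summable_on A"
  shows "(\<Sum>\<^sub>\<infinity>y\<in>A. f y * cnj (f y)) = of_real (\<Sum>\<^sub>\<infinity>y\<in>A. (norm (f y))^2)"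
proof -
  have "((\<lambda>y. complex_of_real ((norm (f y))^2)) has_sum of_real (\<Sum>\<^sub>\<infinity>y\<in>A. (norm (f y))^2)) A"
    using assms by (intro has_sum_of_real has_sum_infsum)
  then show ?thesis
    unfolding complex_norm_square by (rule infsumI)
qed

lemma infsum_norm_sum_orthogonal:
  fixes \<psi> :: "'i \<Rightarrow> 'a \<Rightarrow> complex"
  assumes F: "finite F"
    and l2: "\<And>i. i \<in> F \<Longrightarrow> (\<lambda>y. (norm (\<psi> i y))^2) summable_on UNIV"
    and orth: "\<And>i j. i \<in> F \<Longrightarrow> j \<in> F \<Longrightarrow> i \<noteq> j \<Longrightarrow> (\<Sum>\<^sub>\<infinity>y. cnj (\<psi> j y) * \<psi> i y) = 0"
  shows "(\<lambda>y. (norm (\<Sum>i\<in>F. \<psi> i y))^2) summable_on UNIV"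
    and "(\<Sum>\<^sub>\<infinity>y. (norm (\<Sum>i\<in>F. \<psi> i y))^2) = (\<Sum>i\<in>F. \<Sum>\<^sub>\<infinity>y. (norm (\<psi> i y))^2)"
proof -
  define G where "G y = (\<Sum>i\<in>F. \<Sum>j\<in>F. \<psi> i y * cnj (\<psi> j y))" for y
  have "of_real ((norm (\<Sum>i\<in>F. \<psi> i y))^2) = G y" for y
    unfolding complex_norm_square G_def cnj_sum sum_product ..
  then have norm_sq_eq: "(norm (\<Sum>i\<in>F. \<psi> i y))^2 = Re (G y)" for y
    by (metis Re_complex_of_real)
  have summable: "(\<lambda>y. \<psi> i y * cnj (\<psi> j y)) summable_on UNIV" if "i \<in> F" "j \<in> F" for i j
    using that l2 summable_on_cnj_mult[of "\<psi> i" UNIV "\<psi> j"] by (simp add: mult.commute)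
  then have G: "G summable_on UNIV"
    unfolding G_def using F by (intro summable_on_sum) auto
  then show "(\<lambda>y. (norm (\<Sum>i\<in>F. \<psi> i y))^2) summable_on UNIV"
    unfolding norm_sq_eq by (rule summable_on_Re)
  have off_diagonal: "(\<Sum>j\<in>F - {i}. \<Sum>\<^sub>\<infinity>y. \<psi> i y * cnj (\<psi> j y)) = 0" if "i \<in> F" for i
    using orth that by (intro sum.neutral) (auto simp: mult.commute)
  have "(\<Sum>\<^sub>\<infinity>y. G y) = (\<Sum>i\<in>F. \<Sum>j\<in>F. \<Sum>\<^sub>\<infinity>y. \<psi> i y * cnj (\<psi> j y))"
    unfolding G_def using F summable
    by (subst infsum_sum) (auto intro!: summable_on_sum sum.cong infsum_sum)
  also have "\<dots> = (\<Sum>i\<in>F. \<Sum>\<^sub>\<infinity>y. \<psi> i y * cnj (\<psi> i y))"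
  proof (rule sum.cong[OF refl])
    fix i assume "i \<in> F"
    then show "(\<Sum>j\<in>F. \<Sum>\<^sub>\<infinity>y. \<psi> i y * cnj (\<psi> j y)) = (\<Sum>\<^sub>\<infinity>y. \<psi> i y * cnj (\<psi> i y))"
      using off_diagonal by (simp add: sum.remove[OF F])
  qed
  also have "\<dots> = of_real (\<Sum>i\<in>F. \<Sum>\<^sub>\<infinity>y. (norm (\<psi> i y))^2)"
    using l2 by (simp add: infsum_mult_cnj_self)
  finally show "(\<Sum>\<^sub>\<infinity>y. (norm (\<Sum>i\<in>F. \<psi> i y))^2) = (\<Sum>i\<in>F. \<Sum>\<^sub>\<infinity>y. (norm (\<psi> i y))^2)"
    unfolding norm_sq_eq infsum_Re[OF G] by simp
qed

lemma card_le_orthogonal_family: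
  fixes \<psi> :: "'i \<Rightarrow> 'a \<Rightarrow> complex"
  assumes F: "finite F" and "0 \<le> A"
    and l2: "\<And>i. i \<in> F \<Longrightarrow> (\<lambda>y. (norm (\<psi> i y))^2) summable_on UNIV"
    and orth: "\<And>i j. i \<in> F \<Longrightarrow> j \<in> F \<Longrightarrow> i \<noteq> j \<Longrightarrow> (\<Sum>\<^sub>\<infinity>y. cnj (\<psi> j y) * \<psi> i y) = 0"
    and at_z: "\<And>i. i \<in> F \<Longrightarrow> \<psi> i z = 1"
    and norm_le: "\<And>i. i \<in> F \<Longrightarrow> (\<Sum>\<^sub>\<infinity>y. (norm (\<psi> i y))^2) \<le> A"
  shows "real (card F) \<le> A"
proof -
  let ?n = "real (card F)"
  have "?n^2 = (norm (\<Sum>i\<in>F. \<psi> i z))^2"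
    using at_z by simp
  also have "\<dots> \<le> (\<Sum>\<^sub>\<infinity>y. (norm (\<Sum>i\<in>F. \<psi> i y))^2)"
    using finite_sum_le_infsum[OF infsum_norm_sum_orthogonal(1)[OF F l2 orth], where B = "{z}"] by simp
  also have "\<dots> = (\<Sum>i\<in>F. \<Sum>\<^sub>\<infinity>y. (norm (\<psi> i y))^2)"
    by (rule infsum_norm_sum_orthogonal(2)[OF F l2 orth])
  also have "\<dots> \<le> ?n * A"
    using sum_bounded_above[of F _ A] norm_le by auto
  finally have "?n * ?n \<le> ?n * A"
    by (simp add: power2_eq_square)
  then show ?thesis
    using \<open>0 \<le> A\<close> by (cases "card F = 0") auto
qed

lemma finite_if_finite_subsets_card_le:
  assumes "\<And>S. S \<subseteq> T \<Longrightarrow> finite S \<Longrightarrow> real (card S) \<le> A"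
  shows "finite T"
proof -
  have "card S \<le> nat \<lceil>A\<rceil>" if "S \<subseteq> T" "finite S" for S
    using assms[OF that] by linarith
  then show ?thesis
    using finite_if_finite_subsets_card_bdd by blast
qed

section \<open>The lattice Laplacian\<close>

definition lattice_units :: "(int ^ 'd) set" where
  "lattice_units = {e. (\<Sum>i\<in>UNIV. (e $ i)^2) = 1}"

lemma finite_lattice_units: "finite (lattice_units :: (int ^ 'd) set)"
proof -
  have "e $ i \<in> {-1, 0, 1}" if "e \<in> lattice_units" for e :: "int ^ 'd" and i
  proof -
    have "(e $ i)^2 \<le> (\<Sum>j\<in>UNIV. (e $ j)^2)"
      by (rule member_le_sum) auto
    then have "\<bar>e $ i\<bar> \<le> 1"
      using that abs_square_le_1[of "e $ i"] by (simp add: lattice_units_def)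
    then show ?thesis by (auto simp: abs_le_iff)
  qed
  then have "lattice_units \<subseteq> vec_lambda ` (Pi\<^sub>E (UNIV :: 'd set) (\<lambda>_. {-1, 0, 1 :: int}))"
    by (auto intro!: image_eqI[where x = "vec_nth _"])
  moreover have "finite (Pi\<^sub>E (UNIV :: 'd set) (\<lambda>_. {-1, 0, 1 :: int}))"
    by (rule finite_PiE) auto
  ultimately show ?thesis
    by (meson finite_imageI finite_subset)
qed

lemma uminus_in_lattice_units: "e \<in> lattice_units \<Longrightarrow> - e \<in> lattice_units"
  by (simp add: lattice_units_def)

lemma lat_neighbors_eq: "lat_neighbors y = (+) y ` lattice_units"
proof -
  have "w \<in> lat_neighbors y \<longleftrightarrow> w - y \<in> lattice_units" for w
  proof -
    have "(\<Sum>i\<in>UNIV. (y $ i - w $ i)^2) = (\<Sum>i\<in>UNIV. ((w - y) $ i)^2)"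
      by (intro sum.cong) (auto simp: power2_commute)
    then show ?thesis
      by (simp add: lat_neighbors_def sqdist_lat_def lattice_units_def)
  qed
  moreover have "w \<in> (+) y ` lattice_units \<longleftrightarrow> w - y \<in> lattice_units" for w
    by (auto intro: image_eqI[where x = "w - y"])
  ultimately show ?thesis
    by blast
qed

lemma lat_Delta_eq_sum_units: "lat_Delta f y = (\<Sum>e\<in>lattice_units. f (y + e))"
  unfolding lat_Delta_def lat_neighbors_eq by (subst sum.reindex) (auto simp: inj_on_def)

lemma lat_Delta_lincomb:
  "lat_Delta (\<lambda>y. a * f y + b * g y) y = a * lat_Delta f y + b * lat_Delta g y"
  unfolding lat_Delta_def by (simp add: sum.distrib sum_distrib_left)

lemma anderson_H_lincomb:
  "anderson_H V (\<lambda>y. a * f y + b * g y) y = a * anderson_H V f y + b * anderson_H V g y"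
  unfolding anderson_H_def lat_Delta_lincomb by (simp add: algebra_simps)

lemma in_l2_shift: "in_l2 f \<Longrightarrow> in_l2 (\<lambda>y. f (y + e))"
  unfolding in_l2_def
  by (subst summable_on_reindex_bij_witness[where i = "\<lambda>y. y - e" and j = "\<lambda>y. y + e"]) auto

lemma summable_on_cnj_mult_lat_Delta:
  assumes "in_l2 f" "in_l2 g"
  shows "(\<lambda>y. cnj (g y) * lat_Delta f y) summable_on UNIV"
    and "(\<lambda>y. cnj (lat_Delta g y) * f y) summable_on UNIV"
  using assms unfolding lat_Delta_eq_sum_units cnj_sum sum_distrib_left sum_distrib_right
  by (auto intro!: summable_on_sum finite_lattice_units summable_on_cnj_mult in_l2_shift[unfolded in_l2_def]
      simp: in_l2_def)

lemma lat_Delta_symmetric: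
  fixes f g :: "int ^ 'd \<Rightarrow> complex"
  assumes f: "in_l2 f" and g: "in_l2 g"
  shows "(\<Sum>\<^sub>\<infinity>y. cnj (g y) * lat_Delta f y) = (\<Sum>\<^sub>\<infinity>y. cnj (lat_Delta g y) * f y)"
proof -
  have summable: "(\<lambda>y. cnj (g y) * f (y + e)) summable_on UNIV"
                 "(\<lambda>y. cnj (g (y + e)) * f y) summable_on UNIV" for e
    using f g in_l2_shift[OF f] in_l2_shift[OF g] by (auto intro!: summable_on_cnj_mult simp: in_l2_def)
  have "(\<Sum>\<^sub>\<infinity>y. cnj (g y) * lat_Delta f y) = (\<Sum>e\<in>lattice_units. \<Sum>\<^sub>\<infinity>y. cnj (g y) * f (y + e))"
    unfolding lat_Delta_eq_sum_units sum_distrib_left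
    by (rule infsum_sum) (auto simp: finite_lattice_units summable)
  also have "\<dots> = (\<Sum>e\<in>lattice_units. \<Sum>\<^sub>\<infinity>y. cnj (g (y - e)) * f y)"
  proof (rule sum.cong[OF refl])
    fix e :: "int ^ 'd"
    show "(\<Sum>\<^sub>\<infinity>y. cnj (g y) * f (y + e)) = (\<Sum>\<^sub>\<infinity>y. cnj (g (y - e)) * f y)"
      by (rule infsum_reindex_bij_witness[where i = "\<lambda>y. y - e" and j = "\<lambda>y. y + e"]) auto
  qed
  also have "\<dots> = (\<Sum>e\<in>lattice_units. \<Sum>\<^sub>\<infinity>y. cnj (g (y + e)) * f y)"
    by (rule sum.reindex_bij_witness[where i = uminus and j = uminus]) (auto simp: uminus_in_lattice_units)
  also have "\<dots> = (\<Sum>\<^sub>\<infinity>y. cnj (lat_Delta g y) * f y)"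
    unfolding lat_Delta_eq_sum_units cnj_sum sum_distrib_right
    by (rule infsum_sum[symmetric]) (auto simp: finite_lattice_units summable)
  finally show ?thesis .
qed

lemma infsum_lat_Delta_commutator:
  assumes "in_l2 f" "in_l2 g"
  shows "(\<Sum>\<^sub>\<infinity>y. cnj (g y) * lat_Delta f y - cnj (lat_Delta g y) * f y) = 0"
  using lat_Delta_symmetric[OF assms] summable_on_cnj_mult_lat_Delta[OF assms]
  by (simp add: infsum_diff)

section \<open>Polynomial decay\<close>

lemma summable_on_inverse_1_plus_square_int: "(\<lambda>n::int. inverse (1 + real_of_int n ^ 2)) summable_on UNIV"
proof -
  let ?h = "\<lambda>n::int. inverse (1 + real_of_int n ^ 2)"
  have "summable (\<lambda>n::nat. ?h (int n))"
  proof (rule summable_comparison_test_ev)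
    show "summable (\<lambda>n::nat. inverse (real n ^ 2))"
      by (rule inverse_power_summable) simp
    show "\<forall>\<^sub>F n in sequentially. norm (?h (int n)) \<le> inverse (real n ^ 2)"
      by (intro eventually_sequentiallyI[of 1]) (simp add: le_imp_inverse_le)
  qed
  then have nat_part: "(\<lambda>n::nat. ?h (int n)) summable_on UNIV"
    by (simp add: summable_on_UNIV_nonneg_real_iff)
  have "?h summable_on int ` UNIV"
    using nat_part summable_on_reindex[of int UNIV ?h] by (simp add: o_def)
  moreover have "?h summable_on uminus ` int ` UNIV"
    using nat_part summable_on_reindex[of "\<lambda>n. - int n" UNIV ?h] by (simp add: o_def image_image inj_on_def)
  moreover have "(UNIV :: int set) = int ` UNIV \<union> uminus ` int ` UNIV"
    by (auto simp: image_iff) (metis int_cases2)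
  ultimately show ?thesis
    by (metis summable_on_union)
qed

lemma summable_on_prod_vec:
  fixes f :: "'a::countable \<Rightarrow> real"
  assumes "\<And>t. 0 \<le> f t" "f summable_on UNIV"
  shows "(\<lambda>y::'a ^ 'd. \<Prod>i\<in>UNIV. f (y $ i)) summable_on UNIV"
proof -
  have "Infinite_Set_Sum.abs_summable_on (\<lambda>g. \<Prod>i\<in>(UNIV::'d set). f (g i)) (Pi\<^sub>E UNIV (\<lambda>_. UNIV))"
    using assms by (intro abs_summable_on_prod_PiE abs_summable_equivalent[THEN iffD1]) auto
  then have "(\<lambda>g. \<Prod>i\<in>(UNIV::'d set). f (g i)) summable_on UNIV"
    using assms by (simp add: abs_summable_equivalent[symmetric] prod_nonneg)
  then have "(\<lambda>y::'a ^ 'd. \<Prod>i\<in>UNIV. f (y $ i)) summable_on range vec_lambda"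
    by (subst summable_on_reindex) (auto simp: inj_on_def vec_lambda_inject o_def)
  moreover have "range vec_lambda = (UNIV :: ('a ^ 'd) set)"
    by (metis surj_def vec_nth_inverse)
  ultimately show ?thesis
    by simp
qed

definition decay_weight :: "int ^ 'd \<Rightarrow> real" where
  "decay_weight y = jbracket y powr - real CARD('d)"

lemma jbracket_ge_1: "1 \<le> jbracket y"
  unfolding jbracket_def by (simp add: sum_nonneg)

lemma decay_weight_pos: "0 < decay_weight y"
  using jbracket_ge_1[of y] by (simp add: decay_weight_def)

lemma decay_weight_squared_le_prod:
  "decay_weight (y :: int ^ 'd)^2 \<le> (\<Prod>i\<in>UNIV. inverse (1 + real_of_int (y $ i)^2))"
proof -
  define s where "s = 1 + real_of_int (\<Sum>i\<in>UNIV. (y $ i)^2)"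
  have s: "1 \<le> s" "jbracket y = sqrt s"
    by (simp_all add: s_def jbracket_def sum_nonneg)
  have factor_le: "1 + real_of_int (y $ i)^2 \<le> s" for i
    unfolding s_def by (simp only: add_le_cancel_left of_int_power[symmetric] of_int_le_iff)
      (rule member_le_sum, auto)
  have "decay_weight y = inverse (s powr (real CARD('d) / 2))"
    using s by (simp add: decay_weight_def powr_half_sqrt[symmetric] powr_powr powr_minus)
  moreover have "(s powr (real CARD('d) / 2))^2 = s ^ CARD('d)"
    using s by (simp add: powr_power powr_realpow)
  ultimately have "decay_weight y ^ 2 = inverse (s ^ CARD('d))"
    by (simp add: power_inverse)
  also have "\<dots> \<le> inverse (\<Prod>i\<in>UNIV. 1 + real_of_int (y $ i)^2)"
  proof (rule le_imp_inverse_le)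
    show "(\<Prod>i\<in>UNIV. 1 + real_of_int (y $ i)^2) \<le> s ^ CARD('d)"
      using prod_mono[of UNIV "\<lambda>i. 1 + real_of_int (y $ i)^2" "\<lambda>_. s"] factor_le by simp
  qed (simp add: prod_pos add_pos_nonneg)
  finally show ?thesis
    by (simp add: prod_inversef[symmetric] o_def)
qed

lemma summable_on_decay_weight_squared: "(\<lambda>y::int ^ 'd. decay_weight y ^ 2) summable_on UNIV"
  by (rule summable_on_comparison_test[OF summable_on_prod_vec[OF _ summable_on_inverse_1_plus_square_int]])
    (auto simp: decay_weight_squared_le_prod)

definition decay_bounded :: "real \<Rightarrow> (int ^ 'd \<Rightarrow> complex) \<Rightarrow> bool" where
  "decay_bounded C f \<longleftrightarrow> (\<forall>y. norm (f y) \<le> C * decay_weight y)"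

lemma decay_bounded_in_l2:
  fixes f :: "int ^ 'd \<Rightarrow> complex"
  assumes "decay_bounded C f"
  shows "in_l2 f"
    and "(\<Sum>\<^sub>\<infinity>y. (norm (f y))^2) \<le> C^2 * (\<Sum>\<^sub>\<infinity>y::int ^ 'd. decay_weight y ^ 2)"
proof -
  have pointwise: "(norm (f y))^2 \<le> C^2 * decay_weight y ^ 2" for y
    using assms power_mono[of "norm (f y)" "C * decay_weight y" 2]
    by (simp add: decay_bounded_def power_mult_distrib)
  have summable: "(\<lambda>y::int ^ 'd. C^2 * decay_weight y ^ 2) summable_on UNIV"
    by (intro summable_on_cmult_right summable_on_decay_weight_squared)
  show "in_l2 f"
    unfolding in_l2_def by (rule summable_on_comparison_test[OF summable]) (auto simp: pointwise)
  then show "(\<Sum>\<^sub>\<infinity>y. (norm (f y))^2) \<le> C^2 * (\<Sum>\<^sub>\<infinity>y::int ^ 'd. decay_weight y ^ 2)"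
    unfolding in_l2_def infsum_cmult_right'[symmetric] by (intro infsum_mono summable pointwise)
qed

lemma decay_bounded_lincomb:
  assumes "decay_bounded C f" "decay_bounded D g"
  shows "decay_bounded (norm a * C + norm b * D) (\<lambda>y. a * f y + b * g y)"
  unfolding decay_bounded_def
proof
  fix y
  have "norm (a * f y + b * g y) \<le> norm a * norm (f y) + norm b * norm (g y)"
    by (metis norm_mult norm_triangle_ineq)
  also have "\<dots> \<le> norm a * (C * decay_weight y) + norm b * (D * decay_weight y)"
    using assms unfolding decay_bounded_def by (intro add_mono mult_left_mono) auto
  finally show "norm (a * f y + b * g y) \<le> (norm a * C + norm b * D) * decay_weight y"
    by (simp add: algebra_simps)
qed

lemma decay_bounded_mono: "decay_bounded C f \<Longrightarrow> C \<le> D \<Longrightarrow> decay_bounded D f"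
  unfolding decay_bounded_def
  by (meson decay_weight_pos less_le mult_right_mono order_trans)

lemma has_decay_imp_decay_bounded:
  fixes f :: "int ^ 'd \<Rightarrow> complex"
  assumes "has_decay \<beta> f" "real CARD('d) \<le> \<beta>"
  shows "\<exists>C. decay_bounded C f"
proof -
  obtain C where C: "\<And>y. norm (f y) \<le> C * jbracket y powr - \<beta>"
    using assms(1) unfolding has_decay_def by blast
  have "0 < jbracket (0 :: int ^ 'd) powr - \<beta>"
    using jbracket_ge_1[of "0 :: int ^ 'd"] by simp
  then have "0 \<le> C"
    using order_trans[OF norm_ge_zero C[of 0]] by (simp add: zero_le_mult_iff)
  moreover have "jbracket y powr - \<beta> \<le> decay_weight y" for y :: "int ^ 'd"
    using assms(2) jbracket_ge_1[of y] unfolding decay_weight_def by (intro powr_mono) auto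
  ultimately have "decay_bounded C f"
    unfolding decay_bounded_def by (meson C mult_left_mono order_trans)
  then show ?thesis ..
qed

lemma fast_decaying_imp_decay_bounded:
  fixes f :: "int ^ 'd \<Rightarrow> complex"
  shows "fast_decaying f \<Longrightarrow> \<exists>C. decay_bounded C f"
  unfolding fast_decaying_def by (auto intro: has_decay_imp_decay_bounded)

lemma compact_decay_bounded: "compact {f :: int ^ 'd \<Rightarrow> complex. decay_bounded C f}"
proof -
  have "{f. decay_bounded C f} = Pi\<^sub>E UNIV (\<lambda>y::int ^ 'd. cball (0::complex) (C * decay_weight y))"
    by (auto simp: decay_bounded_def PiE_iff)
  moreover have "compactin (product_topology (\<lambda>_. euclidean) UNIV)
      (Pi\<^sub>E UNIV (\<lambda>y::int ^ 'd. cball (0::complex) (C * decay_weight y)))"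
    by (subst compactin_PiE) auto
  ultimately show ?thesis
    by (simp add: euclidean_product_topology compactin_euclidean_iff)
qed

section \<open>Eigenfunctions\<close>

definition eigen_equation :: "(int ^ 'd \<Rightarrow> real) \<Rightarrow> real \<Rightarrow> (int ^ 'd \<Rightarrow> complex) \<Rightarrow> bool" where
  "eigen_equation V E f \<longleftrightarrow> (\<forall>y. anderson_H V f y = of_real E * f y)"

lemma eigen_equation_lat_Delta:
  "eigen_equation V E f \<Longrightarrow> lat_Delta f y = (of_real (V y) - of_real E) * f y"
  unfolding eigen_equation_def anderson_H_def by (drule spec[of _ y]) (simp add: algebra_simps)

lemma eigen_equation_lincomb:
  "eigen_equation V E f \<Longrightarrow> eigen_equation V E g \<Longrightarrow> eigen_equation V E (\<lambda>y. a * f y + b * g y)"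
  unfolding eigen_equation_def anderson_H_lincomb by (simp add: algebra_simps)

lemma eigen_equation_fun_upd_vanishing:
  "f x = 0 \<Longrightarrow> eigen_equation (V(x := a)) E f \<longleftrightarrow> eigen_equation (V(x := b)) E f"
  unfolding eigen_equation_def anderson_H_def by auto

lemma eigen_equation_potential_unique:
  assumes "in_l2 f" "in_l2 g"
    and "eigen_equation (V(x := a)) E f" "eigen_equation (V(x := b)) E g"
    and "f x = 1" "g x = 1"
  shows "a = b"
proof -
  have "cnj (g y) * lat_Delta f y - cnj (lat_Delta g y) * f y = (if y = x then of_real (a - b) else 0)" for y
    using assms(3-6) by (auto simp: eigen_equation_lat_Delta[OF assms(3)] eigen_equation_lat_Delta[OF assms(4)]
        algebra_simps)
  then show ?thesis
    using infsum_lat_Delta_commutator[OF assms(1,2)] by (simp add: infsum_if_eq)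
qed

lemma eigen_equation_orthogonal:
  assumes "in_l2 f" "in_l2 g"
    and "eigen_equation V E f" "eigen_equation V E' g" "E \<noteq> E'"
  shows "(\<Sum>\<^sub>\<infinity>y. cnj (g y) * f y) = 0"
proof -
  have "cnj (g y) * lat_Delta f y - cnj (lat_Delta g y) * f y = of_real (E' - E) * (cnj (g y) * f y)" for y
    by (simp add: eigen_equation_lat_Delta[OF assms(3)] eigen_equation_lat_Delta[OF assms(4)] algebra_simps)
  then have "of_real (E' - E) * (\<Sum>\<^sub>\<infinity>y. cnj (g y) * f y) = 0"
    using infsum_lat_Delta_commutator[OF assms(1,2)] by (simp add: infsum_cmult_right')
  then show ?thesis
    using \<open>E \<noteq> E'\<close> by simp
qed

section \<open>Potentials with a degenerate eigenvalue\<close>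

definition degenerate_potentials :: "int ^ 'd \<Rightarrow> int ^ 'd \<Rightarrow> nat \<Rightarrow> (int ^ 'd \<Rightarrow> real) set" where
  "degenerate_potentials x z C = {V. \<exists>E \<psi> \<phi>. E \<in> {- real C..real C}
     \<and> decay_bounded (real C) \<psi> \<and> decay_bounded (real C) \<phi> \<and> \<psi> x = 0 \<and> \<psi> z = 1 \<and> \<phi> x = 1
     \<and> eigen_equation V E \<psi> \<and> eigen_equation V E \<phi>}"

lemma finite_degenerate_potentials_section:
  fixes V :: "int ^ 'd \<Rightarrow> real"
  shows "finite {v. V(x := v) \<in> degenerate_potentials x z C}"
proof -
  define T where "T = {v. V(x := v) \<in> degenerate_potentials x z C}"
  define witness where "witness v E \<psi> \<phi> \<longleftrightarrow> decay_bounded (real C) \<psi> \<and> decay_bounded (real C) \<phi>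
      \<and> \<psi> x = 0 \<and> \<psi> z = 1 \<and> \<phi> x = 1 \<and> eigen_equation (V(x := v)) E \<psi> \<and> eigen_equation (V(x := v)) E \<phi>"
    for v E \<psi> \<phi>
  have "\<forall>v\<in>T. \<exists>E \<psi> \<phi>. witness v E \<psi> \<phi>"
    unfolding T_def degenerate_potentials_def witness_def by blast
  then obtain E \<psi> \<phi> where "\<And>v. v \<in> T \<Longrightarrow> witness v (E v) (\<psi> v) (\<phi> v)"
    by metis
  then have witness: "\<And>v. v \<in> T \<Longrightarrow> decay_bounded (real C) (\<psi> v) \<and> decay_bounded (real C) (\<phi> v)
      \<and> \<psi> v x = 0 \<and> \<psi> v z = 1 \<and> \<phi> v x = 1
      \<and> eigen_equation (V(x := v)) (E v) (\<psi> v) \<and> eigen_equation (V(x := v)) (E v) (\<phi> v)"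
    unfolding witness_def by blast
  then have l2: "in_l2 (\<psi> v)" "in_l2 (\<phi> v)" if "v \<in> T" for v
    using that decay_bounded_in_l2(1) by blast+
  have "inj_on E T"
  proof (rule inj_onI)
    fix v w assume "v \<in> T" "w \<in> T" "E v = E w"
    then show "v = w"
      using witness[of v] witness[of w] l2
      by (intro eigen_equation_potential_unique[of "\<phi> v" "\<phi> w" V x v "E v" w]) simp_all
  qed
  have fixed_operator: "eigen_equation (V(x := 0)) (E v) (\<psi> v)" if "v \<in> T" for v
    using witness[OF that] eigen_equation_fun_upd_vanishing[of "\<psi> v" x V v "E v" 0] by blast
  define A where "A = (real C)^2 * (\<Sum>\<^sub>\<infinity>y::int ^ 'd. decay_weight y ^ 2)"
  have "real (card S) \<le> A" if S: "S \<subseteq> T" "finite S" for S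
  proof (rule card_le_orthogonal_family[where \<psi> = \<psi> and z = z])
    show "0 \<le> A"
      unfolding A_def by (simp add: infsum_nonneg)
    fix v assume "v \<in> S"
    then have v: "v \<in> T" using S by blast
    show "(\<lambda>y. (norm (\<psi> v y))^2) summable_on UNIV"
      using l2[OF v] by (simp add: in_l2_def)
    show "\<psi> v z = 1" "(\<Sum>\<^sub>\<infinity>y. (norm (\<psi> v y))^2) \<le> A"
      using witness[OF v] decay_bounded_in_l2(2) by (auto simp: A_def)
    fix w assume "w \<in> S" "v \<noteq> w"
    then have "w \<in> T" "E v \<noteq> E w"
      using S v \<open>inj_on E T\<close> by (auto dest: inj_onD)
    then show "(\<Sum>\<^sub>\<infinity>y. cnj (\<psi> w y) * \<psi> v y) = 0"
      using v by (intro eigen_equation_orthogonal[OF l2(1) l2(1) fixed_operator fixed_operator])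
  qed fact
  then show ?thesis
    unfolding T_def[symmetric] by (rule finite_if_finite_subsets_card_le)
qed

lemma closed_projection_compact:
  fixes S :: "('a::topological_space \<times> 'b::topological_space) set"
  assumes "compact K" "closed S"
  shows "closed {x. \<exists>y\<in>K. (x, y) \<in> S}"
  unfolding closed_def
proof (rule Topological_Spaces.openI)
  fix x assume "x \<in> - {x. \<exists>y\<in>K. (x, y) \<in> S}"
  then have "{x} \<times> K \<subseteq> - S"
    by auto
  moreover have "open (- S)"
    using \<open>closed S\<close> by (simp add: closed_def)
  ultimately obtain U where "x \<in> U" "open U" "U \<times> K \<subseteq> - S"
    by (metis Elementary_Topology.tube_lemma[OF \<open>compact K\<close>])
  then show "\<exists>U. open U \<and> x \<in> U \<and> U \<subseteq> - {x. \<exists>y\<in>K. (x, y) \<in> S}"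
    by blast
qed

lemma continuous_on_anderson_H [continuous_intros]:
  assumes "continuous_on S g" "continuous_on S h"
  shows "continuous_on S (\<lambda>p. anderson_H (g p) (h p) y)"
proof -
  have "continuous_on S (\<lambda>p. g p y)" "continuous_on S (\<lambda>p. h p w)" for w
    using assms by (simp_all add: continuous_on_product_then_coordinatewise)
  then show ?thesis
    unfolding anderson_H_def lat_Delta_def by (intro continuous_intros)
qed

lemma closed_degenerate_potentials:
  fixes x z :: "int ^ 'd"
  shows "closed (degenerate_potentials x z C)"
proof -
  define K :: "(real \<times> (int ^ 'd \<Rightarrow> complex) \<times> (int ^ 'd \<Rightarrow> complex)) set"
    where "K = {- real C..real C} \<times> {\<psi>. decay_bounded (real C) \<psi>} \<times> {\<phi>. decay_bounded (real C) \<phi>}"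
  define S :: "((int ^ 'd \<Rightarrow> real) \<times> real \<times> (int ^ 'd \<Rightarrow> complex) \<times> (int ^ 'd \<Rightarrow> complex)) set"
    where "S = {(V, E, \<psi>, \<phi>). \<psi> x = 0 \<and> \<psi> z = 1 \<and> \<phi> x = 1 \<and> eigen_equation V E \<psi> \<and> eigen_equation V E \<phi>}"
  have evaluation: "continuous_on UNIV (\<lambda>p::(int ^ 'd \<Rightarrow> real) \<times> real \<times> (int ^ 'd \<Rightarrow> complex) \<times> (int ^ 'd \<Rightarrow> complex).
      fst (snd (snd p)) w)"
    "continuous_on UNIV (\<lambda>p::(int ^ 'd \<Rightarrow> real) \<times> real \<times> (int ^ 'd \<Rightarrow> complex) \<times> (int ^ 'd \<Rightarrow> complex).
      snd (snd (snd p)) w)" for w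
    by (rule continuous_on_product_then_coordinatewise, intro continuous_intros)+
  have "closed S"
    unfolding S_def eigen_equation_def split_def
    by (intro closed_Collect_conj closed_Collect_all closed_Collect_eq evaluation continuous_intros)
  moreover have "compact K"
    unfolding K_def by (intro compact_Times compact_Icc compact_decay_bounded)
  moreover have "degenerate_potentials x z C = {V. \<exists>w\<in>K. (V, w) \<in> S}"
    unfolding degenerate_potentials_def K_def S_def by blast
  ultimately show ?thesis
    by (simp add: closed_projection_compact)
qed

lemma null_sets_PiM_if_null_sections:
  fixes M :: "'a measure" and x :: 'i
  assumes M: "prob_space M" and A: "A \<in> sets (Pi\<^sub>M UNIV (\<lambda>_. M))"
    and sections: "\<And>X. {v. X(x := v) \<in> A} \<in> null_sets M"
  shows "A \<in> null_sets (Pi\<^sub>M UNIV (\<lambda>_. M))"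
proof -
  let ?P = "Pi\<^sub>M UNIV (\<lambda>_. M)"
  define f where "f = (\<lambda>(v, X). X(x := v) :: 'i \<Rightarrow> 'a)"
  define B where "B = f -` A \<inter> space (M \<Otimes>\<^sub>M ?P)"
  interpret M: prob_space M by (fact M)
  interpret P: prob_space ?P by (intro prob_space_PiM M)
  interpret pair_sigma_finite M ?P ..
  have f: "f \<in> M \<Otimes>\<^sub>M ?P \<rightarrow>\<^sub>M Pi\<^sub>M (insert x UNIV) (\<lambda>_. M)"
    unfolding f_def by measurable
  have B: "B \<in> sets (M \<Otimes>\<^sub>M ?P)"
    unfolding B_def using f A by (intro measurable_sets) simp_all
  have "emeasure ?P A = emeasure (distr (M \<Otimes>\<^sub>M ?P) (Pi\<^sub>M (insert x UNIV) (\<lambda>_. M)) f) A"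
    unfolding f_def by (subst distr_pair_PiM_eq_PiM) (simp_all add: M)
  also have "\<dots> = emeasure (M \<Otimes>\<^sub>M ?P) B"
    unfolding B_def using f A by (intro emeasure_distr) simp_all
  also have "\<dots> = (\<integral>\<^sup>+ X. emeasure M ((\<lambda>v. (v, X)) -` B) \<partial>?P)"
    using B by (rule emeasure_pair_measure_alt2)
  also have "\<dots> = 0"
  proof -
    have "(\<lambda>v. (v, X)) -` B \<in> null_sets M" for X
      using sections[of X] sets_Pair2[OF B]
      by (rule null_sets_subset) (auto simp: B_def f_def)
    then show ?thesis
      by (simp add: null_setsD1)
  qed
  finally show ?thesis
    using A by auto
qed

lemma null_sets_degenerate_potentials:
  fixes \<mu> :: "real measure"
  assumes \<mu>: "prob_space \<mu>" and sets_\<mu>: "sets \<mu> = sets borel"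
    and finite_null: "\<And>A. finite A \<Longrightarrow> A \<in> null_sets \<mu>"
  shows "(\<Union>(x, z, C)\<in>UNIV. degenerate_potentials x z C) \<in> null_sets (Pi\<^sub>M (UNIV :: (int ^ 'd) set) (\<lambda>_. \<mu>))"
proof (rule null_sets_UN')
  fix i :: "(int ^ 'd) \<times> (int ^ 'd) \<times> nat"
  obtain x z C where i: "i = (x, z, C)"
    by (cases i)
  have "sets (Pi\<^sub>M UNIV (\<lambda>_. \<mu>)) = sets (Pi\<^sub>M (UNIV :: (int ^ 'd) set) (\<lambda>_. borel :: real measure))"
    using sets_\<mu> by (intro sets_PiM_cong) simp_all
  then have "degenerate_potentials x z C \<in> sets (Pi\<^sub>M UNIV (\<lambda>_. \<mu>))"
    using borel_closed[OF closed_degenerate_potentials] by (simp add: sets_PiM_equal_borel)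
  moreover have "{v. X(x := v) \<in> degenerate_potentials x z C} \<in> null_sets \<mu>" for X
    by (intro finite_null finite_degenerate_potentials_section)
  ultimately have "degenerate_potentials x z C \<in> null_sets (Pi\<^sub>M UNIV (\<lambda>_. \<mu>))"
    by (rule null_sets_PiM_if_null_sections[OF \<mu>])
  then show "(case i of (x, z, C) \<Rightarrow> degenerate_potentials x z C) \<in> null_sets (Pi\<^sub>M UNIV (\<lambda>_. \<mu>))"
    by (simp add: i)
qed simp

lemma lin_indep2_ex_determinant_nonzero:
  assumes "lin_indep2 f g" "f x \<noteq> 0"
  shows "\<exists>z. f x * g z - g x * f z \<noteq> 0"
proof (rule ccontr)
  assume "\<not> ?thesis"
  then have "\<forall>y. (- g x) * f y + f x * g y = 0"
    by (simp add: algebra_simps)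
  then show False
    using assms unfolding lin_indep2_def by blast
qed

lemma degenerate_potentials_intro:
  assumes "decay_bounded D \<psi>" "decay_bounded D' \<phi>" "\<psi> x = 0" "\<psi> z = 1" "\<phi> x = 1"
    and "eigen_equation V E \<psi>" "eigen_equation V E \<phi>"
  shows "V \<in> (\<Union>(x, z, C)\<in>UNIV. degenerate_potentials x z C)"
proof -
  define C where "C = nat \<lceil>max \<bar>E\<bar> (max D D')\<rceil>"
  have "V \<in> degenerate_potentials x z C"
    unfolding degenerate_potentials_def
  proof (intro CollectI exI conjI)
    show "E \<in> {- real C..real C}"
      unfolding C_def by (simp add: abs_le_iff) linarith
    show "decay_bounded (real C) \<psi>" "decay_bounded (real C) \<phi>"
      using assms(1,2) unfolding C_def by (auto elim!: decay_bounded_mono) linarith+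
  qed (fact assms)+
  then show ?thesis
    by blast
qed

lemma degenerate_potentials_cover:
  fixes V :: "int ^ 'd \<Rightarrow> real"
  assumes "\<exists>E \<phi>1 \<phi>2. is_eigenfunction V E \<phi>1 \<and> is_eigenfunction V E \<phi>2
      \<and> fast_decaying \<phi>1 \<and> fast_decaying \<phi>2 \<and> lin_indep2 \<phi>1 \<phi>2"
  shows "V \<in> (\<Union>(x, z, C)\<in>UNIV. degenerate_potentials x z C)"
proof -
  obtain E \<phi>1 \<phi>2 where eigenfunctions: "is_eigenfunction V E \<phi>1" "is_eigenfunction V E \<phi>2"
    and "fast_decaying \<phi>1" "fast_decaying \<phi>2" and indep: "lin_indep2 \<phi>1 \<phi>2"
    using assms by blast
  obtain C1 C2 where C1: "decay_bounded C1 \<phi>1" and C2: "decay_bounded C2 \<phi>2"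
    using \<open>fast_decaying \<phi>1\<close> \<open>fast_decaying \<phi>2\<close> fast_decaying_imp_decay_bounded by blast
  have eq1: "eigen_equation V E \<phi>1" and eq2: "eigen_equation V E \<phi>2"
    using eigenfunctions by (simp_all add: is_eigenfunction_def eigen_equation_def)
  obtain x where x: "\<phi>1 x \<noteq> 0"
    using eigenfunctions(1) by (auto simp: is_eigenfunction_def)
  obtain z where "\<phi>1 x * \<phi>2 z - \<phi>2 x * \<phi>1 z \<noteq> 0"
    using lin_indep2_ex_determinant_nonzero[OF indep x] ..
  define w where "w = \<phi>1 x * \<phi>2 z - \<phi>2 x * \<phi>1 z"
  with \<open>\<phi>1 x * \<phi>2 z - \<phi>2 x * \<phi>1 z \<noteq> 0\<close> have "w \<noteq> 0"
    by simp
  define \<psi> where "\<psi> y = (\<phi>1 x / w) * \<phi>2 y + (- \<phi>2 x / w) * \<phi>1 y" for y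
  have \<psi>_eq: "\<psi> y = (\<phi>1 x * \<phi>2 y - \<phi>2 x * \<phi>1 y) / w" for y
    unfolding \<psi>_def by (simp add: diff_divide_distrib)
  define \<phi> where "\<phi> y = (1 / \<phi>1 x) * \<phi>1 y + 0 * \<phi>2 y" for y
  show ?thesis
  proof (rule degenerate_potentials_intro)
    show "decay_bounded (norm (\<phi>1 x / w) * C2 + norm (- \<phi>2 x / w) * C1) \<psi>"
      unfolding \<psi>_def by (intro decay_bounded_lincomb C1 C2)
    show "decay_bounded (norm (1 / \<phi>1 x) * C1 + norm (0::complex) * C2) \<phi>"
      unfolding \<phi>_def by (intro decay_bounded_lincomb C1 C2)
    show "\<psi> x = 0"
      by (simp add: \<psi>_eq mult.commute)
    show "\<psi> z = 1"
      unfolding \<psi>_eq w_def[symmetric] using \<open>w \<noteq> 0\<close> by simp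
    show "\<phi> x = 1"
      using x by (simp add: \<phi>_def)
    show "eigen_equation V E \<psi>" "eigen_equation V E \<phi>"
      unfolding \<psi>_def \<phi>_def by (intro eigen_equation_lincomb eq1 eq2)+
  qed
qed

theorem mainTheorem1:
  fixes \<rho> :: "real \<Rightarrow> real"
  assumes meas: "\<rho> \<in> borel_measurable lborel"
    and nonneg: "\<And>t. 0 \<le> \<rho> t"
    and bdd: "\<exists>B. \<forall>t. \<rho> t \<le> B"
    and prob: "prob_space (density lborel (\<lambda>t. ennreal (\<rho> t)))"
  shows "AE V in PiM (UNIV :: (int ^ 'd) set) (\<lambda>_. density lborel (\<lambda>t. ennreal (\<rho> t))).
           \<not> (\<exists>E \<phi>1 \<phi>2. is_eigenfunction V E \<phi>1 \<and> is_eigenfunction V E \<phi>2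
                   \<and> fast_decaying \<phi>1 \<and> fast_decaying \<phi>2 \<and> lin_indep2 \<phi>1 \<phi>2)"
proof (rule AE_I')
  let ?\<mu> = "density lborel (\<lambda>t. ennreal (\<rho> t))"
  have "(\<lambda>t. ennreal (\<rho> t)) \<in> borel_measurable lborel"
    using meas by measurable
  then have "null_sets lborel \<subseteq> null_sets ?\<mu>"
    using absolutely_continuousI_density unfolding absolutely_continuous_def by blast
  then have "A \<in> null_sets ?\<mu>" if "finite A" for A
    using finite_imp_null_set_lborel[OF that] by blast
  with prob show "(\<Union>(x, z, C)\<in>UNIV. degenerate_potentials x z C)
      \<in> null_sets (Pi\<^sub>M (UNIV :: (int ^ 'd) set) (\<lambda>_. ?\<mu>))"
    by (intro null_sets_degenerate_potentials) simp_all
qed (use degenerate_potentials_cover in blast)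

end
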